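(* Let $X$ be a finite set of proposals with $|X|\geq 3$. No divisiveness selection function on $X$ simultaneously satisfies Anonymity, Neutrality, Clone Consistency, and Position Unanimity.
   Context: $X!$ is the set of strict linear orders on $X$; a profile is a function $R:N\to X!$ with $N\subset\mathbb{N}$ finite and nonempty. A divisiveness selection function (DSF) maps every profile to a nonempty subset of $X$. Anonymity: $\Delta(R)=\Delta(R\circ\sigma)$ for every profile $R$ and every bijection $\sigma:\mathbb{N}\to\mathbb{N}$. Neutrality: $\Delta(\sigma(R))=\sigma(\Delta(R))$ for every profile $R$ and permutation $\sigma:X\to X$ (extended naturally to subsets of $X$ and to profiles). Two proposals are clones in $R$ if they are adjacent in every agent's ranking in $R$. Clone Consistency: for every profile $R$ and proposals $x,x',y$ such that $x,x'$ are clones in $R$ but $x,y$ are not, $\{x,y\}\subseteq\Delta(R)$ implies $\{x,x',y\}\subseteq\Delta(R)$. A profile is unanimous if all agents report the same ranking; $x$ occurs in the same position throughout $R$ if the number of proposals ranked above $x$ is the same in every ranking of $R$. Position Unanimity: $x\notin\Delta(R)$ for every non-unanimous profile $R$ and every proposal $x$ occurring in the same position throughout $R$. *)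

theory Defs
  imports Main
begin

(* Proposals are the elements of a finite type 'x (so X = UNIV :: 'x set).
   A ranking (element of X!) is a strict linear order r on X;
   (a, b) \<in> r means that a is ranked above b. *)

type_synonym 'x profile = "nat \<rightharpoonup> 'x rel"

definition is_profile :: "'x profile \<Rightarrow> bool" where
  "is_profile R \<longleftrightarrow> finite (dom R) \<and> dom R \<noteq> {} \<and>
     (\<forall>r \<in> ran R. strict_linear_order r)"

definition is_DSF :: "('x profile \<Rightarrow> 'x set) \<Rightarrow> bool" where
  "is_DSF \<Delta> \<longleftrightarrow> (\<forall>R. is_profile R \<longrightarrow> \<Delta> R \<noteq> {})"

definition anonymous :: "('x profile \<Rightarrow> 'x set) \<Rightarrow> bool" where
  "anonymous \<Delta> \<longleftrightarrow>
     (\<forall>R (\<sigma> :: nat \<Rightarrow> nat). is_profile R \<longrightarrow> bij \<sigma> \<longrightarrow> \<Delta> R = \<Delta> (R \<circ> \<sigma>))"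

definition perm_rel :: "('x \<Rightarrow> 'x) \<Rightarrow> 'x rel \<Rightarrow> 'x rel" where
  "perm_rel \<sigma> r = map_prod \<sigma> \<sigma> ` r"

definition perm_profile :: "('x \<Rightarrow> 'x) \<Rightarrow> 'x profile \<Rightarrow> 'x profile" where
  "perm_profile \<sigma> R = map_option (perm_rel \<sigma>) \<circ> R"

definition neutral :: "('x profile \<Rightarrow> 'x set) \<Rightarrow> bool" where
  "neutral \<Delta> \<longleftrightarrow>
     (\<forall>R \<sigma>. is_profile R \<longrightarrow> bij \<sigma> \<longrightarrow> \<Delta> (perm_profile \<sigma> R) = \<sigma> ` \<Delta> R)"

definition adjacent :: "'x rel \<Rightarrow> 'x \<Rightarrow> 'x \<Rightarrow> bool" where
  "adjacent r x y \<longleftrightarrow> x \<noteq> y \<and>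
     \<not> (\<exists>z. ((x, z) \<in> r \<and> (z, y) \<in> r) \<or> ((y, z) \<in> r \<and> (z, x) \<in> r))"

definition clones :: "'x profile \<Rightarrow> 'x \<Rightarrow> 'x \<Rightarrow> bool" where
  "clones R x y \<longleftrightarrow> (\<forall>r \<in> ran R. adjacent r x y)"

definition clone_consistent :: "('x profile \<Rightarrow> 'x set) \<Rightarrow> bool" where
  "clone_consistent \<Delta> \<longleftrightarrow>
     (\<forall>R x x' y. is_profile R \<longrightarrow> clones R x x' \<longrightarrow> \<not> clones R x y \<longrightarrow>
        {x, y} \<subseteq> \<Delta> R \<longrightarrow> {x, x', y} \<subseteq> \<Delta> R)"

definition unanimous :: "'x profile \<Rightarrow> bool" where
  "unanimous R \<longleftrightarrow> (\<forall>r \<in> ran R. \<forall>r' \<in> ran R. r = r')"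

definition position :: "'x rel \<Rightarrow> 'x \<Rightarrow> nat" where
  "position r x = card {y. (y, x) \<in> r}"

definition same_position :: "'x profile \<Rightarrow> 'x \<Rightarrow> bool" where
  "same_position R x \<longleftrightarrow> (\<forall>r \<in> ran R. \<forall>r' \<in> ran R. position r x = position r' x)"

definition position_unanimous :: "('x profile \<Rightarrow> 'x set) \<Rightarrow> bool" where
  "position_unanimous \<Delta> \<longleftrightarrow>
     (\<forall>R x. is_profile R \<longrightarrow> \<not> unanimous R \<longrightarrow> same_position R x \<longrightarrow> x \<notin> \<Delta> R)"

end

theory Submission
  imports Defs "HOL-Combinatorics.Transposition"
begin

(* Take distinct proposals a, b, c, a ranking r that starts with a, b, c, and the
   two-agent profile R = (r, r') where r' is r with a and c exchanged (so r' starts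
   with c, b, a).  Exchanging the two agents of R has the same effect as exchanging
   a and c, so by Anonymity and Neutrality the selection on R is invariant under
   the transposition (a c).  Every other proposal occupies the same position in r
   and r', so by Position Unanimity the selection is {a, c}.  But a and b are clones
   in R while a and c are not, so Clone Consistency also selects b. *)

lemma strict_linear_order_inv_image:
  assumes "inj f" and "strict_linear_order r"
  shows "strict_linear_order (inv_image r f)"
  using assms trans_inv_image total_inv_image
  unfolding strict_linear_order_on_def irrefl_def by auto

lemma strict_linear_order_less_than: "strict_linear_order less_than"
  unfolding strict_linear_order_on_def using irrefl_less_than by simp

lemma inv_image_comp: "inv_image (inv_image r f) g = inv_image r (f \<circ> g)"
  by auto

lemma perm_rel_eq_inv_image:
  assumes "bij \<sigma>"
  shows "perm_rel \<sigma> r = inv_image r (inv \<sigma>)"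
  using assms unfolding perm_rel_def
  by (auto simp: image_iff bij_is_inj bij_is_surj surj_f_inv_f
      intro!: bexI[of _ "(inv \<sigma> _, inv \<sigma> _)"])

lemma strict_linear_order_perm_rel:
  assumes "bij \<sigma>" and "strict_linear_order r"
  shows "strict_linear_order (perm_rel \<sigma> r)"
  unfolding perm_rel_eq_inv_image[OF assms(1)]
  using bij_is_inj[OF bij_imp_bij_inv[OF assms(1)]] assms(2)
  by (rule strict_linear_order_inv_image)

lemma perm_rel_involution:
  assumes "\<And>x. \<sigma> (\<sigma> x) = x"
  shows "perm_rel \<sigma> (perm_rel \<sigma> r) = r"
proof -
  have "map_prod \<sigma> \<sigma> (map_prod \<sigma> \<sigma> p) = p" for p
    using assms by (cases p) simp
  then show ?thesis
    unfolding perm_rel_def image_image by simp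
qed

lemma position_perm_rel:
  assumes "bij \<sigma>"
  shows "position (perm_rel \<sigma> r) (\<sigma> x) = position r x"
proof -
  have "{y. (y, \<sigma> x) \<in> perm_rel \<sigma> r} = \<sigma> ` {y. (y, x) \<in> r}"
    using assms unfolding perm_rel_def bij_def inj_def by force
  then show ?thesis
    unfolding position_def
    using card_image[OF inj_on_subset[OF bij_is_inj[OF assms] subset_UNIV]] by simp
qed

lemma perm_rel_transpose_inv_image:
  "perm_rel (transpose a c) (inv_image s g) = inv_image s (g \<circ> transpose a c)"
  unfolding perm_rel_eq_inv_image[OF bij_transpose] inv_image_comp by simp

lemma perm_rel_transpose_inv_image_less_than_neq:
  assumes "g a < g c"
  shows "perm_rel (transpose a c) (inv_image less_than g) \<noteq> inv_image less_than g"
proof -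
  have "(a, c) \<in> inv_image less_than g - perm_rel (transpose a c) (inv_image less_than g)"
    unfolding perm_rel_transpose_inv_image using assms by simp
  then show ?thesis by blast
qed

lemma adjacent_commute: "adjacent r x y \<longleftrightarrow> adjacent r y x"
  unfolding adjacent_def by blast

lemma adjacent_inv_image_less_than:
  assumes "g y = Suc (g x)"
  shows "adjacent (inv_image less_than g) x y"
  using assms unfolding adjacent_def by auto

lemma not_adjacent_inv_image_less_than:
  assumes "g x < g z" and "g z < g y"
  shows "\<not> adjacent (inv_image less_than g) x y"
  using assms unfolding adjacent_def by auto

definition swap_profile :: "('x \<Rightarrow> 'x) \<Rightarrow> 'x rel \<Rightarrow> 'x profile" where
  "swap_profile \<sigma> r = [0 \<mapsto> r, 1 \<mapsto> perm_rel \<sigma> r]"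

lemma ran_swap_profile: "ran (swap_profile \<sigma> r) = {r, perm_rel \<sigma> r}"
  unfolding swap_profile_def by auto

lemma clones_swap_profile_transpose:
  assumes "g a = 0" and "g b = 1" and "g c = 2"
  shows "clones (swap_profile (transpose a c) (inv_image less_than g)) a b"
proof -
  have "a \<noteq> b" "b \<noteq> c"
    using assms by auto
  have "adjacent (inv_image less_than g) a b"
    by (rule adjacent_inv_image_less_than) (simp add: assms)
  moreover have "adjacent (perm_rel (transpose a c) (inv_image less_than g)) a b"
    unfolding perm_rel_transpose_inv_image adjacent_commute[of _ a]
    using \<open>a \<noteq> b\<close> \<open>b \<noteq> c\<close>
    by (intro adjacent_inv_image_less_than) (auto simp: assms transpose_def)
  ultimately show ?thesis
    unfolding clones_def ran_swap_profile by simp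
qed

lemma not_clones_swap_profile:
  assumes "g a < g b" and "g b < g c"
  shows "\<not> clones (swap_profile \<sigma> (inv_image less_than g)) a c"
  unfolding clones_def ran_swap_profile
  using not_adjacent_inv_image_less_than[of g a b c, OF assms] by simp

lemma is_profile_swap_profile:
  assumes "bij \<sigma>" and "strict_linear_order r"
  shows "is_profile (swap_profile \<sigma> r)"
  using assms strict_linear_order_perm_rel
  unfolding is_profile_def ran_swap_profile by (simp add: swap_profile_def)

lemma perm_profile_swap_profile:
  assumes "\<And>x. \<sigma> (\<sigma> x) = x"
  shows "perm_profile \<sigma> (swap_profile \<sigma> r) = swap_profile \<sigma> r \<circ> transpose 0 1"
  using assms
  by (auto simp: perm_profile_def swap_profile_def transpose_def perm_rel_involution)

lemma image_selection_swap_profile: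
  assumes "anonymous \<Delta>" and "neutral \<Delta>"
    and "\<And>x. \<sigma> (\<sigma> x) = x" and "strict_linear_order r"
  shows "\<sigma> ` \<Delta> (swap_profile \<sigma> r) = \<Delta> (swap_profile \<sigma> r)"
proof -
  have "bij \<sigma>"
    using assms(3) by (rule involuntory_imp_bij)
  then have "is_profile (swap_profile \<sigma> r)"
    using assms(4) by (rule is_profile_swap_profile)
  then show ?thesis
    using assms(1,2) \<open>bij \<sigma>\<close> perm_profile_swap_profile[OF assms(3)]
    unfolding anonymous_def neutral_def by (metis bij_transpose)
qed

lemma fixpoint_notin_selection_swap_profile:
  assumes "position_unanimous \<Delta>" and "bij \<sigma>" and "strict_linear_order r"
    and "perm_rel \<sigma> r \<noteq> r" and "\<sigma> x = x"
  shows "x \<notin> \<Delta> (swap_profile \<sigma> r)"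
proof -
  have "\<not> unanimous (swap_profile \<sigma> r)"
    using assms(4) unfolding unanimous_def ran_swap_profile by auto
  moreover have "same_position (swap_profile \<sigma> r) x"
    using position_perm_rel[OF assms(2), of r x] assms(5)
    unfolding same_position_def ran_swap_profile by auto
  ultimately show ?thesis
    using assms(1) is_profile_swap_profile[OF assms(2,3)]
    unfolding position_unanimous_def by blast
qed

lemma selection_swap_profile_transpose:
  assumes "is_DSF \<Delta>" and "anonymous \<Delta>" and "neutral \<Delta>" and "position_unanimous \<Delta>"
    and "strict_linear_order r" and "perm_rel (transpose a c) r \<noteq> r"
  shows "\<Delta> (swap_profile (transpose a c) r) = {a, c}"
proof -
  let ?R = "swap_profile (transpose a c) r"
  have "\<Delta> ?R \<subseteq> {a, c}"
    using fixpoint_notin_selection_swap_profile[OF assms(4) bij_transpose assms(5,6)]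
    by (metis insertCI subsetI transpose_apply_other)
  moreover obtain x where "x \<in> \<Delta> ?R"
    using assms(1) is_profile_swap_profile[OF bij_transpose assms(5)]
    unfolding is_DSF_def by blast
  moreover have "transpose a c x \<in> \<Delta> ?R"
    using image_selection_swap_profile[OF assms(2,3) transpose_involutory[of a c] assms(5)]
      \<open>x \<in> \<Delta> ?R\<close> by blast
  ultimately show ?thesis
    by auto
qed

lemma obtain_three_distinct:
  assumes "card (UNIV :: 'x set) \<ge> 3"
  obtains a b c :: 'x where "a \<noteq> b" and "b \<noteq> c" and "a \<noteq> c"
proof -
  obtain A :: "'x set" where "card A = 3"
    using obtain_subset_with_card_n[OF assms] by metis
  then show thesis
    using that by (auto simp: card_3_iff)
qed

lemma obtain_inj_to_nat_012:
  assumes "a \<noteq> b" and "b \<noteq> c" and "a \<noteq> c"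
  obtains f :: "'x :: finite \<Rightarrow> nat" where "inj f" and "f a = 0" and "f b = 1" and "f c = 2"
proof -
  obtain g :: "'x \<Rightarrow> nat" where "inj g"
    by (meson finite_UNIV finite_imp_inj_to_nat_seg)
  define f where
    "f x = (if x = a then 0 else if x = b then 1 else if x = c then 2 else g x + 3)" for x
  have "inj f"
    using \<open>inj g\<close> assms unfolding inj_def f_def by auto
  then show thesis
    using that assms by (simp add: f_def)
qed

theorem theorem3:
  fixes \<Delta> :: "('x :: finite) profile \<Rightarrow> 'x set"
  assumes "card (UNIV :: 'x set) \<ge> 3"
  shows "\<not> (is_DSF \<Delta> \<and> anonymous \<Delta> \<and> neutral \<Delta> \<and> clone_consistent \<Delta> \<and> position_unanimous \<Delta>)"
proof
  assume "is_DSF \<Delta> \<and> anonymous \<Delta> \<and> neutral \<Delta> \<and> clone_consistent \<Delta> \<and> position_unanimous \<Delta>"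
  then have axioms: "is_DSF \<Delta>" "anonymous \<Delta>" "neutral \<Delta>" "position_unanimous \<Delta>"
    and clone: "clone_consistent \<Delta>" by blast+
  obtain a b c :: 'x where abc: "a \<noteq> b" "b \<noteq> c" "a \<noteq> c"
    using assms by (rule obtain_three_distinct)
  obtain f :: "'x \<Rightarrow> nat" where f: "inj f" "f a = 0" "f b = 1" "f c = 2"
    using abc by (rule obtain_inj_to_nat_012)
  define r where "r = inv_image less_than f"
  define R where "R = swap_profile (transpose a c) r"
  have r: "strict_linear_order r"
    unfolding r_def using f(1) strict_linear_order_less_than
    by (rule strict_linear_order_inv_image)
  have "\<Delta> R = {a, c}"
    unfolding R_def using axioms r
    by (rule selection_swap_profile_transpose)
      (simp add: r_def f perm_rel_transpose_inv_image_less_than_neq)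
  moreover have "clones R a b"
    unfolding R_def r_def using f(2-4) by (rule clones_swap_profile_transpose)
  moreover have "\<not> clones R a c"
    unfolding R_def r_def by (rule not_clones_swap_profile[of f a b]) (simp_all add: f)
  ultimately have "b \<in> \<Delta> R"
    using clone is_profile_swap_profile[OF bij_transpose r]
    unfolding clone_consistent_def R_def by blast
  then show False
    using \<open>\<Delta> R = {a, c}\<close> abc by simp
qed

end
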